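(* Let $L>0$, $0<\varepsilon<1$, $K$ an interval of $\mathbb{R}$ and $\mu$ a probability measure on $\mathbb{R}$. Assume that for some $\eta>0$ and all $E\in K$, either $\Im g_\mu(E+i\eta)\le L$ or $\mu([E-\frac\eta2,E+\frac\eta2])\le L\eta$. Then there exists a universal constant $c$ such that for any interval $I\subset K$ of length at least $\eta$ with $\mathrm{dist}(I,K^c)\ge\varepsilon$, $$\Big|\mu(I)-\frac1\pi\int_I\Im g_\mu(E+i\eta)\,dE\Big|\le c(L\vee\varepsilon^{-1})\,\eta\log\Big(1+\frac{|I|}{\eta}\Big).$$
   Context: $g_\mu(z)=\int\frac{\mu(dx)}{x-z}$ is the Cauchy–Stieltjes transform of $\mu$, for $z$ with $\Im z>0$; $|I|$ is the length of $I$. *)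

theory Defs
  imports "HOL-Probability.Probability"
begin

definition stieltjes :: "real measure \<Rightarrow> complex \<Rightarrow> complex" where
  "stieltjes M z = (LINT x|M. 1 / (complex_of_real x - z))"

end

theory Submission
  imports Defs
begin

text \<open>
  Writing \<open>Im g(E + i\<eta>)\<close> as the integral of the Poisson kernel and applying Fubini,
  \<open>(1/\<pi>) \<integral>\<^sub>I Im g(E + i\<eta>) dE\<close> is the \<open>\<mu>\<close>-integral of the Poisson smoothing \<open>P\<close> of the
  indicator of \<open>I = [a,b]\<close>, which is an explicit difference of arctangents. The error
  \<open>|1\<^sub>I - P|\<close> is at most 1 within \<open>\<eta>\<close> of an endpoint and decays like
  \<open>min (\<eta>/u) (\<eta>|I|/u\<^sup>2)\<close> at distance \<open>u\<close> from it. Cover the \<open>\<epsilon>/2\<close>-neighbourhood of each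
  endpoint by windows of width \<open>\<eta>\<close>; they lie in \<open>K\<close>, so each carries mass at most \<open>5L\<eta>/4\<close>
  (the Poisson kernel is at least \<open>4/(5\<eta>)\<close> on the window below \<open>E + i\<eta>\<close>), and summing the decay
  over the windows gives \<open>L\<eta>\<close> times a harmonic sum of order \<open>log(1 + |I|/\<eta>)\<close>. Farther
  than \<open>\<epsilon>/2\<close> from the endpoints the error is at most \<open>2\<eta>/\<epsilon>\<close>.
\<close>

lemma arctan_diff_le_diff:
  fixes p q :: real assumes "q \<le> p" shows "arctan p - arctan q \<le> p - q"
proof (cases "q = p")
  case False
  with assms have "q < p" by simp
  from MVT2[OF this, of arctan "\<lambda>x. inverse (1 + x\<^sup>2)"]
  obtain z where "arctan p - arctan q = (p - q) * inverse (1 + z\<^sup>2)"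
    using DERIV_arctan by blast
  moreover have "inverse (1 + z\<^sup>2) \<le> 1"
    by (simp add: inverse_le_1_iff)
  ultimately show ?thesis using \<open>q < p\<close>
    by (metis mult.right_neutral mult_left_mono diff_ge_0_iff_ge less_imp_le)
qed simp

lemma arctan_le_self: "(y::real) \<ge> 0 \<Longrightarrow> arctan y \<le> y"
  using arctan_diff_le_diff[of 0 y] by simp

lemma arctan_eq_pi_half_minus_arctan_inverse:
  "(y::real) > 0 \<Longrightarrow> arctan y = pi/2 - arctan (1/y)"
  using arctan_inverse[of y] by (simp add: inverse_eq_divide)

lemma arctan_shift_le:
  fixes d l \<eta> :: real assumes "d > 0" "l \<ge> 0" "\<eta> > 0"
  shows "arctan ((d + l)/\<eta>) - arctan (d/\<eta>) \<le> \<eta>*l/(d*(d + l))"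
proof -
  have "arctan ((d + l)/\<eta>) - arctan (d/\<eta>) = arctan (\<eta>/d) - arctan (\<eta>/(d + l))"
    using arctan_eq_pi_half_minus_arctan_inverse[of "(d + l)/\<eta>"]
      arctan_eq_pi_half_minus_arctan_inverse[of "d/\<eta>"] assms by simp
  also have "\<dots> \<le> \<eta>/d - \<eta>/(d + l)"
    by (rule arctan_diff_le_diff) (use assms in \<open>simp add: frac_le\<close>)
  also have "\<dots> = \<eta>*l/(d*(d + l))" using assms by (simp add: field_simps)
  finally show ?thesis .
qed

lemma poisson_kernel_le:
  fixes \<eta> u :: real assumes "\<eta> > 0" shows "\<eta>/(u\<^sup>2 + \<eta>\<^sup>2) \<le> 1/\<eta>"
proof -
  have "\<eta>/(u\<^sup>2 + \<eta>\<^sup>2) \<le> \<eta>/\<eta>\<^sup>2"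
    by (rule frac_le) (use assms in auto)
  also have "\<dots> = 1/\<eta>" using assms by (simp add: power2_eq_square)
  finally show ?thesis .
qed

lemma Im_stieltjes_eq_integral_poisson_kernel:
  fixes M :: "real measure"
  assumes "prob_space M" "sets M = sets borel" "\<eta> > 0"
  shows "Im (stieltjes M (Complex E \<eta>)) = (\<integral>x. \<eta>/((x - E)\<^sup>2 + \<eta>\<^sup>2) \<partial>M)"
proof -
  interpret prob_space M by (fact assms(1))
  have "norm (1 / (complex_of_real x - Complex E \<eta>)) \<le> 1/\<eta>" for x
  proof -
    have "\<eta> \<le> norm (complex_of_real x - Complex E \<eta>)"
      using abs_Im_le_cmod[of "complex_of_real x - Complex E \<eta>"] assms(3) by simp
    then show ?thesis using assms(3) by (simp add: norm_divide frac_le)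
  qed
  moreover have "(\<lambda>x. 1 / (complex_of_real x - Complex E \<eta>)) \<in> borel_measurable M"
    unfolding measurable_cong_sets[OF assms(2) refl] by measurable
  ultimately have "integrable M (\<lambda>x. 1 / (complex_of_real x - Complex E \<eta>))"
    by (intro integrable_const_bound[where B="1/\<eta>"]) auto
  then have "Im (stieltjes M (Complex E \<eta>)) = (\<integral>x. Im (1 / (complex_of_real x - Complex E \<eta>)) \<partial>M)"
    unfolding stieltjes_def by (rule integral_Im[symmetric])
  then show ?thesis using assms(3) by (simp add: Im_divide power2_eq_square)
qed

lemma set_integral_integral_poisson_kernel_swap:
  fixes M :: "real measure" and I :: "real set"
  assumes P: "prob_space M" and S: "sets M = sets borel" and "\<eta> > 0"
    and [measurable]: "I \<in> sets borel" and fin: "emeasure lborel I < \<infinity>"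
  shows "(LINT E:I|lborel. (\<integral>x. \<eta>/((x - E)\<^sup>2 + \<eta>\<^sup>2) \<partial>M))
       = (\<integral>x. (LINT E:I|lborel. \<eta>/((x - E)\<^sup>2 + \<eta>\<^sup>2)) \<partial>M)"
proof -
  interpret M: prob_space M by (fact P)
  interpret pair_sigma_finite M lborel
    by (intro pair_sigma_finite.intro M.sigma_finite_measure_axioms lborel.sigma_finite_measure_axioms)
  define f where "f = (\<lambda>x E. indicator I E * (\<eta>/((x - E)\<^sup>2 + \<eta>\<^sup>2)) :: real)"
  have f_bounds: "0 \<le> f x E" "f x E \<le> 1/\<eta> * indicator I E" for x E
    using poisson_kernel_le[of \<eta> "x - E"] \<open>\<eta> > 0\<close> by (auto simp: f_def indicator_def)
  have f_measurable: "case_prod f \<in> borel_measurable (M \<Otimes>\<^sub>M lborel)"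
    unfolding measurable_cong_sets[OF sets_pair_measure_cong[OF S refl] refl] f_def by measurable
  have indicator_integrable: "integrable lborel (\<lambda>E. 1/\<eta> * indicator I E :: real)"
    using fin by (intro integrable_mult_right integrable_real_indicator) auto
  have f_integrable: "integrable lborel (f x)" for x
  proof (rule Bochner_Integration.integrable_bound[OF indicator_integrable])
    show "f x \<in> borel_measurable lborel" unfolding f_def by measurable
    have "norm (f x E) \<le> norm (1/\<eta> * indicator I E :: real)" for E
      using f_bounds[of x E] \<open>\<eta> > 0\<close> by simp
    then show "AE E in lborel. norm (f x E) \<le> norm (1/\<eta> * indicator I E :: real)"
      by simp
  qed
  have "integrable M (\<lambda>x. \<integral>E. norm (f x E) \<partial>lborel)"
  proof (rule M.integrable_const_bound[where B="1/\<eta> * measure lborel I"])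
    have "(\<integral>E. norm (f x E) \<partial>lborel) \<le> (\<integral>E. 1/\<eta> * indicator I E \<partial>lborel)" for x
      using f_bounds f_integrable indicator_integrable by (intro integral_mono) auto
    then show "AE x in M. norm (\<integral>E. norm (f x E) \<partial>lborel) \<le> 1/\<eta> * measure lborel I"
      using fin by simp
  qed (use f_measurable in measurable)
  then have "integrable (M \<Otimes>\<^sub>M lborel) (case_prod f)"
    by (intro Fubini_integrable f_measurable) (auto intro: f_integrable)
  then have "(\<integral>E. (\<integral>x. f x E \<partial>M) \<partial>lborel) = (\<integral>x. (\<integral>E. f x E \<partial>lborel) \<partial>M)"
    by (rule Fubini_integral)
  moreover have "(\<integral>x. f x E \<partial>M) = indicator I E * (\<integral>x. \<eta>/((x - E)\<^sup>2 + \<eta>\<^sup>2) \<partial>M)" for E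
    unfolding f_def by (rule integral_mult_right_zero)
  ultimately show ?thesis
    unfolding set_lebesgue_integral_def f_def by simp
qed

definition poisson_indicator :: "real \<Rightarrow> real \<Rightarrow> real \<Rightarrow> real \<Rightarrow> real" where
  "poisson_indicator a b \<eta> x = (arctan ((b - x)/\<eta>) - arctan ((a - x)/\<eta>)) / pi"

lemma poisson_indicator_nonneg: "a \<le> b \<Longrightarrow> \<eta> > 0 \<Longrightarrow> 0 \<le> poisson_indicator a b \<eta> x"
  unfolding poisson_indicator_def
  by (intro divide_nonneg_pos) (simp_all add: arctan_le_iff divide_right_mono)

lemma poisson_indicator_le_1: "poisson_indicator a b \<eta> x \<le> 1"
  unfolding poisson_indicator_def
  using arctan_bounded[of "(b - x)/\<eta>"] arctan_bounded[of "(a - x)/\<eta>"] by simp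

lemma set_integral_poisson_kernel:
  fixes I :: "real set"
  assumes "a \<le> b" "{a<..<b} \<subseteq> I" "I \<subseteq> {a..b}" "\<eta> > 0"
  shows "(LINT E:I|lborel. \<eta>/((x - E)\<^sup>2 + \<eta>\<^sup>2)) = pi * poisson_indicator a b \<eta> x"
proof -
  have pos: "(x - E)\<^sup>2 + \<eta>\<^sup>2 \<noteq> 0" for E
    using assms(4) by (simp add: add_nonneg_eq_0_iff)
  have "(LINT E:I|lborel. \<eta>/((x - E)\<^sup>2 + \<eta>\<^sup>2)) = (LINT E:{a..b}|lborel. \<eta>/((x - E)\<^sup>2 + \<eta>\<^sup>2))"
    by (rule set_integral_discrete_difference[where X="{a,b}"])
       (use assms(2,3) in \<open>force simp: subset_iff\<close>)+
  also have "\<dots> = (LBINT E=a..b. \<eta>/((x - E)\<^sup>2 + \<eta>\<^sup>2))"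
    by (rule interval_integral_Icc[symmetric]) fact
  also have "\<dots> = arctan ((b - x)/\<eta>) - arctan ((a - x)/\<eta>)"
  proof (rule interval_integral_FTC_finite)
    show "continuous_on {min a b..max a b} (\<lambda>E. \<eta>/((x - E)\<^sup>2 + \<eta>\<^sup>2))"
      by (intro continuous_intros) (use pos in auto)
    fix E
    have "((\<lambda>E. arctan ((E - x)/\<eta>)) has_real_derivative inverse (1 + ((E - x)/\<eta>)\<^sup>2) * (1/\<eta>)) (at E)"
      using assms(4) by (auto intro!: derivative_eq_intros)
    moreover have "inverse (1 + ((E - x)/\<eta>)\<^sup>2) * (1/\<eta>) = \<eta>/((x - E)\<^sup>2 + \<eta>\<^sup>2)"
      using assms(4) pos[of E] by (simp add: field_simps power2_eq_square)
    ultimately show "((\<lambda>E. arctan ((E - x)/\<eta>)) has_vector_derivative \<eta>/((x - E)\<^sup>2 + \<eta>\<^sup>2))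
        (at E within {min a b..max a b})"
      by (simp add: has_real_derivative_iff_has_vector_derivative has_vector_derivative_at_within)
  qed
  finally show ?thesis by (simp add: poisson_indicator_def)
qed

lemma bounded_interval_between_Inf_Sup:
  fixes I :: "real set" assumes "is_interval I" "bounded I" "I \<noteq> {}"
  shows "{Inf I<..<Sup I} \<subseteq> I" "I \<subseteq> {Inf I..Sup I}"
proof -
  have bdd: "bdd_below I" "bdd_above I"
    using assms(2) bounded_imp_bdd_below bounded_imp_bdd_above by auto
  show "I \<subseteq> {Inf I..Sup I}" using bdd by (auto intro: cInf_lower cSup_upper)
  show "{Inf I<..<Sup I} \<subseteq> I"
  proof
    fix x assume "x \<in> {Inf I<..<Sup I}"
    then obtain y z where "y \<in> I" "y < x" "z \<in> I" "x < z"
      using cInf_less_iff[OF assms(3) bdd(1)] less_cSup_iff[OF assms(3) bdd(2)] by auto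
    then show "x \<in> I" using assms(1) unfolding is_interval_1 by (meson less_imp_le)
  qed
qed

lemma emeasure_lborel_between:
  fixes I :: "real set" assumes "a \<le> b" "{a<..<b} \<subseteq> I" "I \<subseteq> {a..b}" "I \<in> sets borel"
  shows "emeasure lborel I = ennreal (b - a)"
proof -
  have "emeasure lborel {a<..<b} \<le> emeasure lborel I"
    by (rule emeasure_mono) (use assms in auto)
  moreover have "emeasure lborel I \<le> emeasure lborel {a..b}"
    by (rule emeasure_mono) (use assms in auto)
  ultimately show ?thesis using assms(1) by simp
qed

lemma bounded_interval_obtain_endpoints:
  fixes I :: "real set" assumes "is_interval I" "bounded I" "I \<noteq> {}"
  obtains a b where "a \<le> b" "{a<..<b} \<subseteq> I" "I \<subseteq> {a..b}" "measure lborel I = b - a"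
proof -
  have sub: "{Inf I<..<Sup I} \<subseteq> I" "I \<subseteq> {Inf I..Sup I}"
    using bounded_interval_between_Inf_Sup[OF assms] by auto
  then have "Inf I \<le> Sup I" using assms(3) by auto
  moreover have "measure lborel I = Sup I - Inf I"
    using emeasure_lborel_between[OF _ sub real_interval_borel_measurable[OF assms(1)]] calculation
    by (simp add: measure_def)
  ultimately show ?thesis using sub that by blast
qed

lemma abs_measure_diff_set_integral_Im_stieltjes_le:
  fixes M :: "real measure" and I :: "real set"
  assumes P: "prob_space M" and S: "sets M = sets borel" and eta: "\<eta> > 0"
    and ab: "a \<le> b" "{a<..<b} \<subseteq> I" "I \<subseteq> {a..b}" and Ib: "I \<in> sets borel"
    and g: "integrable M g" "\<And>x. \<bar>indicator I x - poisson_indicator a b \<eta> x\<bar> \<le> g x"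
  shows "\<bar>measure M I - (1/pi) * (LINT E:I|lborel. Im (stieltjes M (Complex E \<eta>)))\<bar>
    \<le> (\<integral>x. g x \<partial>M)"
proof -
  interpret prob_space M by (fact P)
  have "(\<lambda>x. poisson_indicator a b \<eta> x) \<in> borel_measurable M"
    unfolding measurable_cong_sets[OF S refl] poisson_indicator_def by measurable
  then have P_integrable: "integrable M (poisson_indicator a b \<eta>)"
    using poisson_indicator_nonneg[OF ab(1) eta] poisson_indicator_le_1
    by (intro integrable_const_bound[where B=1]) auto
  have I_integrable: "integrable M (indicator I :: real \<Rightarrow> real)"
    using Ib S by (intro integrable_real_indicator) (auto simp: less_top[symmetric])
  have "emeasure lborel I < \<infinity>"
    using emeasure_lborel_between[OF ab Ib] by simp
  then have "(LINT E:I|lborel. Im (stieltjes M (Complex E \<eta>)))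
      = (\<integral>x. (LINT E:I|lborel. \<eta>/((x - E)\<^sup>2 + \<eta>\<^sup>2)) \<partial>M)"
    using set_integral_integral_poisson_kernel_swap[OF P S eta Ib]
    by (simp add: Im_stieltjes_eq_integral_poisson_kernel[OF P S eta])
  also have "\<dots> = pi * (\<integral>x. poisson_indicator a b \<eta> x \<partial>M)"
    by (simp add: set_integral_poisson_kernel[OF ab eta])
  finally have "measure M I - (1/pi) * (LINT E:I|lborel. Im (stieltjes M (Complex E \<eta>)))
      = (\<integral>x. indicator I x - poisson_indicator a b \<eta> x \<partial>M)"
    using I_integrable P_integrable sets_eq_imp_space_eq[OF S] by simp
  also have "\<bar>\<dots>\<bar> \<le> (\<integral>x. \<bar>indicator I x - poisson_indicator a b \<eta> x\<bar> \<partial>M)"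
    by (rule integral_abs_bound)
  also have "\<dots> \<le> (\<integral>x. g x \<partial>M)"
    using I_integrable P_integrable g by (intro integral_mono) auto
  finally show ?thesis .
qed

lemma measure_window_le_of_Im_stieltjes_le:
  fixes M :: "real measure"
  assumes P: "prob_space M" and S: "sets M = sets borel" and eta: "\<eta> > 0"
    and Im_le: "Im (stieltjes M (Complex E \<eta>)) \<le> L"
  shows "measure M {E - \<eta>/2 .. E + \<eta>/2} \<le> 5/4 * L * \<eta>"
proof -
  interpret prob_space M by (fact P)
  define W where "W = {E - \<eta>/2 .. E + \<eta>/2}"
  have [measurable]: "W \<in> sets M" using S by (simp add: W_def)
  have kernel_integrable: "integrable M (\<lambda>x. \<eta>/((x - E)\<^sup>2 + \<eta>\<^sup>2))"
  proof (rule integrable_const_bound[where B="1/\<eta>"])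
    show "AE x in M. norm (\<eta>/((x - E)\<^sup>2 + \<eta>\<^sup>2)) \<le> 1/\<eta>"
      using poisson_kernel_le[OF eta] eta by simp
    show "(\<lambda>x. \<eta>/((x - E)\<^sup>2 + \<eta>\<^sup>2)) \<in> borel_measurable M"
      unfolding measurable_cong_sets[OF S refl] by measurable
  qed
  have kernel_on_window: "4/(5*\<eta>) * indicator W x \<le> \<eta>/((x - E)\<^sup>2 + \<eta>\<^sup>2)" for x
  proof (cases "x \<in> W")
    case True
    then have "x - E \<le> \<eta>/2 \<and> E - x \<le> \<eta>/2"
      by (auto simp: W_def)
    then have "\<bar>x - E\<bar> \<le> \<eta>/2"
      unfolding abs_le_iff by linarith
    then have "(x - E)\<^sup>2 \<le> (\<eta>/2)\<^sup>2"
      by (metis abs_ge_zero power_mono power2_abs)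
    moreover have "0 < (x - E)\<^sup>2 + \<eta>\<^sup>2"
      using eta by (simp add: add_nonneg_pos)
    ultimately have "\<eta>/(5*\<eta>\<^sup>2/4) \<le> \<eta>/((x - E)\<^sup>2 + \<eta>\<^sup>2)"
      using eta by (intro frac_le) (auto simp: power2_eq_square)
    then show ?thesis using True eta by (simp add: power2_eq_square)
  qed (use eta in simp)
  have "4/(5*\<eta>) * measure M W = (\<integral>x. 4/(5*\<eta>) * indicator W x \<partial>M)"
    by simp
  also have "\<dots> \<le> (\<integral>x. \<eta>/((x - E)\<^sup>2 + \<eta>\<^sup>2) \<partial>M)"
    using kernel_integrable kernel_on_window
    by (intro integral_mono integrable_mult_right integrable_real_indicator)
       (auto simp: less_top[symmetric])
  also have "\<dots> \<le> L"
    using Im_le Im_stieltjes_eq_integral_poisson_kernel[OF P S eta] by simp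
  finally show ?thesis
    using eta by (simp add: W_def field_simps)
qed

text \<open>
  \<open>decay_profile l \<eta> u\<close> bounds the error \<open>|1\<^sub>I - P|\<close> coming from an endpoint of an
  interval \<open>I\<close> of length \<open>l\<close> at signed distance \<open>u\<close> from it.
\<close>
definition decay_profile :: "real \<Rightarrow> real \<Rightarrow> real \<Rightarrow> real" where
  "decay_profile l \<eta> u = (if \<bar>u\<bar> \<le> \<eta> then 1 else min (\<eta>/\<bar>u\<bar>) (\<eta>*l/u\<^sup>2))"

lemma decay_profile_nonneg: "\<eta> > 0 \<Longrightarrow> l \<ge> 0 \<Longrightarrow> 0 \<le> decay_profile l \<eta> u"
  by (auto simp: decay_profile_def)

lemma decay_profile_le_1: "\<eta> > 0 \<Longrightarrow> decay_profile l \<eta> u \<le> 1"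
  by (auto simp: decay_profile_def min_le_iff_disj)

lemma decay_profile_minus [simp]: "decay_profile l \<eta> (- u) = decay_profile l \<eta> u"
  by (simp add: decay_profile_def)

lemma decay_profile_eq_inverse:
  assumes "\<eta> > 0" "\<eta> < \<bar>u\<bar>" "\<bar>u\<bar> \<le> l"
  shows "decay_profile l \<eta> u = \<eta>/\<bar>u\<bar>"
proof -
  have "\<eta>/\<bar>u\<bar> = \<eta>*\<bar>u\<bar>/(\<bar>u\<bar> * \<bar>u\<bar>)"
    using assms by (simp del: abs_mult_self_eq)
  also have "\<dots> = \<eta>*\<bar>u\<bar>/u\<^sup>2"
    by (simp add: power2_eq_square)
  also have "\<dots> \<le> \<eta>*l/u\<^sup>2"
    using assms by (intro divide_right_mono mult_left_mono) auto
  finally show ?thesis using assms by (simp add: decay_profile_def)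
qed

lemma decay_profile_ge:
  assumes "\<eta> > 0" "\<eta> < d" "l \<ge> 0"
  shows "\<eta>*l/(d*(d + l)) \<le> decay_profile l \<eta> d"
proof -
  have "\<eta>*l/(d*(d + l)) = (\<eta>/d) * (l/(d + l))" by simp
  also have "\<dots> \<le> \<eta>/d" by (rule mult_left_le) (use assms in auto)
  finally have "\<eta>*l/(d*(d + l)) \<le> \<eta>/d" .
  moreover have "\<eta>*l/(d*(d + l)) \<le> \<eta>*l/d\<^sup>2"
    unfolding power2_eq_square using assms
    by (intro divide_left_mono mult_left_mono mult_pos_pos) auto
  ultimately show ?thesis using assms by (simp add: decay_profile_def)
qed

lemma poisson_indicator_reflect:
  "poisson_indicator (- b) (- a) \<eta> (- x) = poisson_indicator a b \<eta> x"
proof -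
  have "(- a - - x)/\<eta> = - ((a - x)/\<eta>)" "(- b - - x)/\<eta> = - ((b - x)/\<eta>)"
    by (simp_all add: minus_divide_left)
  then show ?thesis by (simp add: poisson_indicator_def arctan_minus)
qed

lemma poisson_indicator_left_le:
  assumes "a \<le> b" "\<eta> > 0" "x < a - \<eta>"
  shows "poisson_indicator a b \<eta> x \<le> decay_profile (b - a) \<eta> (x - a)"
proof -
  define d where "d = a - x"
  have d: "\<eta> < d" using assms by (simp add: d_def)
  have "pi * poisson_indicator a b \<eta> x = arctan ((d + (b - a))/\<eta>) - arctan (d/\<eta>)"
    by (simp add: poisson_indicator_def d_def)
  also have "\<dots> \<le> \<eta>*(b - a)/(d*(d + (b - a)))"
    by (rule arctan_shift_le) (use assms d in auto)
  also have "\<dots> \<le> decay_profile (b - a) \<eta> d"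
    by (rule decay_profile_ge) (use assms d in auto)
  also have "\<dots> = decay_profile (b - a) \<eta> (x - a)"
    using decay_profile_minus[of "b - a" \<eta> "x - a"] by (simp add: d_def)
  finally show ?thesis
    using poisson_indicator_nonneg[OF assms(1,2), of x] pi_gt3
    by (smt (verit) mult_le_cancel_right1)
qed

lemma poisson_indicator_right_le:
  assumes "a \<le> b" "\<eta> > 0" "b + \<eta> < x"
  shows "poisson_indicator a b \<eta> x \<le> decay_profile (b - a) \<eta> (x - b)"
  using poisson_indicator_left_le[of "- b" "- a" \<eta> "- x"] assms
    decay_profile_minus[of "b - a" \<eta> "x - b"]
  by (simp add: poisson_indicator_reflect)

lemma one_sub_poisson_indicator_le:
  assumes "\<eta> > 0" "a + \<eta> < x" "x < b - \<eta>"
  shows "1 - poisson_indicator a b \<eta> x \<le> \<eta>/(x - a) + \<eta>/(b - x)"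
proof -
  have "arctan ((b - x)/\<eta>) = pi/2 - arctan (\<eta>/(b - x))"
    using arctan_eq_pi_half_minus_arctan_inverse[of "(b - x)/\<eta>"] assms by simp
  moreover have "(a - x)/\<eta> = - ((x - a)/\<eta>)"
    by (metis minus_diff_eq minus_divide_left)
  then have "arctan ((a - x)/\<eta>) = - (pi/2 - arctan (\<eta>/(x - a)))"
    using arctan_eq_pi_half_minus_arctan_inverse[of "(x - a)/\<eta>"] assms
    by (simp add: arctan_minus)
  ultimately have "1 - poisson_indicator a b \<eta> x = (arctan (\<eta>/(x - a)) + arctan (\<eta>/(b - x)))/pi"
    by (simp add: poisson_indicator_def field_simps)
  also have "\<dots> \<le> arctan (\<eta>/(x - a)) + arctan (\<eta>/(b - x))"
  proof (rule mult_imp_div_pos_le)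
    have "0 \<le> arctan (\<eta>/(x - a)) + arctan (\<eta>/(b - x))"
      using assms by (intro add_nonneg_nonneg) auto
    then show "arctan (\<eta>/(x - a)) + arctan (\<eta>/(b - x))
        \<le> (arctan (\<eta>/(x - a)) + arctan (\<eta>/(b - x))) * pi"
      using pi_gt3 by (simp add: mult_le_cancel_left1)
  qed simp
  also have "\<dots> \<le> \<eta>/(x - a) + \<eta>/(b - x)"
    using assms by (intro add_mono arctan_le_self) auto
  finally show ?thesis .
qed

lemma abs_indicator_sub_poisson_indicator_le:
  fixes I :: "real set"
  assumes "\<eta> > 0" "\<eta> \<le> b - a" "{a<..<b} \<subseteq> I" "I \<subseteq> {a..b}"
  shows "\<bar>indicator I x - poisson_indicator a b \<eta> x\<bar>
    \<le> decay_profile (b - a) \<eta> (x - a) + decay_profile (b - a) \<eta> (x - b)"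
proof -
  have P: "0 \<le> poisson_indicator a b \<eta> x" "poisson_indicator a b \<eta> x \<le> 1"
    using poisson_indicator_nonneg[of a b \<eta> x] poisson_indicator_le_1 assms(1,2) by auto
  have G: "0 \<le> decay_profile (b - a) \<eta> (x - a)" "0 \<le> decay_profile (b - a) \<eta> (x - b)"
    using decay_profile_nonneg assms(1,2) by auto
  consider "\<bar>x - a\<bar> \<le> \<eta> \<or> \<bar>x - b\<bar> \<le> \<eta>" | "x < a - \<eta>" | "b + \<eta> < x" | "a + \<eta> < x \<and> x < b - \<eta>"
    by linarith
  then show ?thesis
  proof cases
    case 1
    then have "1 \<le> decay_profile (b - a) \<eta> (x - a) + decay_profile (b - a) \<eta> (x - b)"
      using G by (auto simp: decay_profile_def)
    then show ?thesis using P by (auto simp: indicator_def)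
  next
    case 2
    then show ?thesis
      using poisson_indicator_left_le[of a b \<eta> x] assms P G by (auto simp: indicator_def)
  next
    case 3
    then show ?thesis
      using poisson_indicator_right_le[of a b \<eta> x] assms P G by (auto simp: indicator_def)
  next
    case 4
    then have "x \<in> I" using assms by auto
    moreover have "\<eta>/(x - a) + \<eta>/(b - x)
        = decay_profile (b - a) \<eta> (x - a) + decay_profile (b - a) \<eta> (x - b)"
      using 4 assms decay_profile_eq_inverse[of \<eta> "x - a" "b - a"]
        decay_profile_eq_inverse[of \<eta> "x - b" "b - a"] by (simp add: abs_minus_commute)
    ultimately show ?thesis
      using one_sub_poisson_indicator_le[of \<eta> a x b] 4 assms P by simp
  qed
qed

text \<open>
  \<open>decay_weight m j\<close> bounds \<open>decay_profile l \<eta>\<close> on the window of width \<open>\<eta>\<close> centred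
  at distance \<open>j\<eta>\<close> from the endpoint, where \<open>m = l/\<eta>\<close>.
\<close>
definition decay_weight :: "real \<Rightarrow> nat \<Rightarrow> real" where
  "decay_weight m j = (if j = 0 then 1 else min (2/real j) (4*m/(real j)\<^sup>2))"

lemma decay_weight_nonneg: "m \<ge> 0 \<Longrightarrow> 0 \<le> decay_weight m j"
  by (auto simp: decay_weight_def)

lemma decay_profile_le_decay_weight:
  assumes eta: "\<eta> > 0" "\<eta> \<le> l" and j: "\<bar>real j * \<eta> - \<bar>u\<bar>\<bar> \<le> \<eta>/2"
  shows "decay_profile l \<eta> u \<le> decay_weight (l/\<eta>) j"
proof (cases "j = 0")
  case True
  then show ?thesis using decay_profile_le_1[OF eta(1)] by (simp add: decay_weight_def)
next
  case False
  then have j1: "1 \<le> real j" by simp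
  then have "\<eta> \<le> real j * \<eta>" using eta by simp
  then have u: "real j * \<eta> / 2 \<le> \<bar>u\<bar>" using j unfolding abs_le_iff by linarith
  show ?thesis
  proof (cases "\<bar>u\<bar> \<le> \<eta>")
    case True
    then have "real j * \<eta> < 2 * \<eta>" using j eta unfolding abs_le_iff by linarith
    then have "j < 2" using eta by simp
    then have "j = 1" using False by simp
    then show ?thesis using True eta by (simp add: decay_profile_def decay_weight_def)
  next
    case far: False
    have jeta: "0 < real j * \<eta> / 2" using False eta by simp
    have "\<eta>/\<bar>u\<bar> \<le> \<eta>/(real j * \<eta> / 2)"
      by (rule divide_left_mono[OF u]) (use eta jeta u in auto)
    then have inverse_le: "\<eta>/\<bar>u\<bar> \<le> 2/real j" using eta by simp
    have "(real j * \<eta> / 2)\<^sup>2 \<le> \<bar>u\<bar>\<^sup>2"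
      by (rule power_mono[OF u]) (use jeta in simp)
    then have square_le: "(real j * \<eta> / 2)\<^sup>2 \<le> u\<^sup>2" by simp
    have "0 < (real j * \<eta> / 2)\<^sup>2" by (rule zero_less_power[OF jeta])
    then have "\<eta>*l/u\<^sup>2 \<le> \<eta>*l/(real j * \<eta> / 2)\<^sup>2"
      using eta square_le by (intro divide_left_mono[OF square_le] mult_pos_pos) auto
    also have "\<dots> = 4*(l/\<eta>)/(real j)\<^sup>2"
      using eta False by (simp add: field_simps power2_eq_square)
    finally show ?thesis
      using far False inverse_le by (simp add: decay_profile_def decay_weight_def min_le_iff_disj)
  qed
qed

lemma decay_profile_le_far:
  assumes "\<eta> > 0" "\<epsilon> > 0" "\<epsilon>/2 \<le> \<bar>u\<bar>"
  shows "decay_profile l \<eta> u \<le> 2*\<eta>/\<epsilon>"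
proof (cases "\<bar>u\<bar> \<le> \<eta>")
  case True
  then show ?thesis using assms by (simp add: decay_profile_def field_simps)
next
  case False
  then have "decay_profile l \<eta> u \<le> \<eta>/\<bar>u\<bar>" by (simp add: decay_profile_def)
  also have "\<dots> \<le> \<eta>/(\<epsilon>/2)" using assms by (intro divide_left_mono) auto
  finally show ?thesis by (simp add: mult.commute)
qed

lemma finite_nat_mult_less: "\<eta> > 0 \<Longrightarrow> finite {j::nat. real j * \<eta> < \<epsilon>}"
proof -
  assume "\<eta> > 0"
  obtain n where n: "\<epsilon>/\<eta> < real n" using reals_Archimedean2 by blast
  have "{j::nat. real j * \<eta> < \<epsilon>} \<subseteq> {..<n}"
  proof
    fix j assume "j \<in> {j::nat. real j * \<eta> < \<epsilon>}"
    then have "real j < \<epsilon>/\<eta>" using \<open>\<eta> > 0\<close> by (simp add: field_simps)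
    then show "j \<in> {..<n}" using n by simp
  qed
  then show ?thesis using finite_subset by blast
qed

lemma nat_multiple_near:
  assumes "\<eta> > 0" "0 \<le> t"
  obtains j :: nat where "\<bar>real j * \<eta> - t\<bar> \<le> \<eta>/2"
proof -
  define r where "r = round (t/\<eta>)"
  have "0 \<le> r"
    unfolding r_def round_def using assms by simp
  then have "real (nat r) = of_int r" by simp
  moreover have "t/\<eta> - 1/2 \<le> of_int r" "of_int r \<le> t/\<eta> + 1/2"
    unfolding r_def by (rule of_int_round_ge, rule of_int_round_le)
  ultimately have "t - \<eta>/2 \<le> real (nat r) * \<eta>" "real (nat r) * \<eta> \<le> t + \<eta>/2"
    using assms by (simp_all add: field_simps)
  then have "\<bar>real (nat r) * \<eta> - t\<bar> \<le> \<eta>/2"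
    unfolding abs_le_iff by linarith
  then show ?thesis by (rule that)
qed

lemma decay_profile_le_windows:
  assumes eta: "\<eta> > 0" "\<eta> \<le> \<epsilon>" "\<eta> \<le> l"
  shows "decay_profile l \<eta> (x - c) \<le> (\<Sum>j | real j * \<eta> < \<epsilon>. decay_weight (l/\<eta>) j *
      (indicator {c + real j * \<eta> - \<eta>/2 .. c + real j * \<eta> + \<eta>/2} x
       + indicator {c - real j * \<eta> - \<eta>/2 .. c - real j * \<eta> + \<eta>/2} x)) + 2*\<eta>/\<epsilon>"
    (is "_ \<le> (\<Sum>j\<in>?J. ?T j) + _")
proof -
  have T_nonneg: "0 \<le> ?T j" for j
    using decay_weight_nonneg[of "l/\<eta>" j] eta by simp
  have near_le: "decay_profile l \<eta> (x - c) \<le> sum ?T ?J"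
    if near: "\<bar>x - c\<bar> < \<epsilon>/2"
  proof -
    obtain j where j: "\<bar>real j * \<eta> - \<bar>x - c\<bar>\<bar> \<le> \<eta>/2"
      using nat_multiple_near[OF eta(1), of "\<bar>x - c\<bar>"] by auto
    then have "real j * \<eta> < \<epsilon>" using near eta unfolding abs_le_iff by linarith
    then have "j \<in> ?J" by simp
    have "x \<in> {c + real j * \<eta> - \<eta>/2 .. c + real j * \<eta> + \<eta>/2}
        \<or> x \<in> {c - real j * \<eta> - \<eta>/2 .. c - real j * \<eta> + \<eta>/2}"
      using j by (simp, smt (verit))
    then have "1 \<le> indicator {c + real j * \<eta> - \<eta>/2 .. c + real j * \<eta> + \<eta>/2} x
       + (indicator {c - real j * \<eta> - \<eta>/2 .. c - real j * \<eta> + \<eta>/2} x :: real)"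
      by (auto simp: indicator_def)
    then have "decay_weight (l/\<eta>) j \<le> ?T j"
      using decay_weight_nonneg[of "l/\<eta>" j] eta by (simp add: mult_le_cancel_left1)
    also have "\<dots> \<le> sum ?T ?J"
      using \<open>j \<in> ?J\<close> T_nonneg finite_nat_mult_less[OF eta(1)] by (intro member_le_sum) auto
    finally show ?thesis
      using decay_profile_le_decay_weight[OF eta(1,3) j] by linarith
  qed
  show ?thesis
  proof (cases "\<bar>x - c\<bar> < \<epsilon>/2")
    case True
    moreover have "0 \<le> 2*\<eta>/\<epsilon>" using eta by simp
    ultimately show ?thesis using near_le by fastforce
  next
    case False
    then have "decay_profile l \<eta> (x - c) \<le> 2*\<eta>/\<epsilon>"
      using decay_profile_le_far eta by simp
    moreover have "0 \<le> sum ?T ?J" using T_nonneg by (simp add: sum_nonneg)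
    ultimately show ?thesis by linarith
  qed
qed

lemma harm_le_1_plus_ln: "1 \<le> n \<Longrightarrow> (harm n :: real) \<le> 1 + ln (real n)"
proof -
  assume "1 \<le> n"
  then have "harm (Suc (n - 1)) - ln (Suc (n - 1)) \<le> (harm (Suc 0) :: real) - ln (Suc 0)"
    using decseq_harm_diff_ln unfolding decseq_def by blast
  then show ?thesis using \<open>1 \<le> n\<close> by (simp add: harm_def)
qed

lemma sum_inverse_square_le:
  "p \<ge> 1 \<Longrightarrow> (\<Sum>j\<in>{Suc p..p + n}. 1/(real j)\<^sup>2) \<le> 1/real p - 1/real (p + n)"
proof (induction n)
  case (Suc n)
  define q where "q = real (p + n)"
  have q: "q \<ge> 1" using Suc.prems by (simp add: q_def)
  have "1/(q + 1)\<^sup>2 \<le> 1/(q*(q + 1))"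
    using q by (intro divide_left_mono) (auto simp: power2_eq_square)
  also have "\<dots> = 1/q - 1/(q + 1)" using q by (simp add: field_simps)
  finally show ?case
    using Suc by (simp add: q_def add.commute)
qed simp

lemma sum_decay_weight_le:
  assumes m: "m \<ge> 1" and fin: "finite J"
  shows "(\<Sum>j\<in>J. decay_weight m j) \<le> 11 + 2 * ln m"
proof -
  obtain N where "J \<subseteq> {..N}" using fin finite_nat_set_iff_bounded_le by auto
  define p where "p = nat \<lfloor>m\<rfloor>"
  have p: "real p \<le> m" "m < real p + 1" "1 \<le> p"
    using m by (auto simp: p_def le_nat_floor)
  have weight_le: "decay_weight m j \<le> 2/real j" "decay_weight m j \<le> 4*m * (1/(real j)\<^sup>2)"
    if "j \<noteq> 0" for j
    using that by (simp_all add: decay_weight_def)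
  have "(\<Sum>j\<in>J. decay_weight m j) \<le> (\<Sum>j\<in>{..N}. decay_weight m j)"
    by (rule sum_mono2) (use \<open>J \<subseteq> {..N}\<close> decay_weight_nonneg m in auto)
  also have "\<dots> \<le> (\<Sum>j\<in>{..p + N}. decay_weight m j)"
    by (rule sum_mono2) (use decay_weight_nonneg m in auto)
  also have "{..p + N} = {0} \<union> {1..p} \<union> {Suc p..p + N}" by auto
  also have "(\<Sum>j\<in>\<dots>. decay_weight m j) = 1 + (\<Sum>j=1..p. decay_weight m j)
      + (\<Sum>j\<in>{Suc p..p + N}. decay_weight m j)"
    by (subst sum.union_disjoint; simp add: decay_weight_def)+
  also have "\<dots> \<le> 1 + (\<Sum>j=1..p. 2 * inverse (real j)) + (\<Sum>j\<in>{Suc p..p + N}. 4*m * (1/(real j)\<^sup>2))"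
    using weight_le by (intro add_mono sum_mono order.refl) (auto simp: divide_inverse)
  also have "\<dots> = 1 + 2 * harm p + 4*m * (\<Sum>j\<in>{Suc p..p + N}. 1/(real j)\<^sup>2)"
    by (simp add: harm_def sum_distrib_left)
  also have "\<dots> \<le> 1 + 2 * (1 + ln (real p)) + 4*m * (1/real p)"
  proof -
    have "(\<Sum>j\<in>{Suc p..p + N}. 1/(real j)\<^sup>2) \<le> 1/real p"
      using sum_inverse_square_le[OF p(3), of N] by (smt (verit) divide_nonneg_nonneg of_nat_0_le_iff)
    then show ?thesis
      using harm_le_1_plus_ln[OF p(3)] m by (intro add_mono mult_left_mono) auto
  qed
  also have "\<dots> \<le> 11 + 2 * ln m"
  proof -
    have "ln (real p) \<le> ln m" using p by simp
    moreover have "4*m * (1/real p) \<le> 8" using p by (simp add: field_simps)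
    ultimately show ?thesis by (smt (verit))
  qed
  finally show ?thesis .
qed

lemma integral_weighted_windows_le:
  fixes M :: "real measure"
  assumes P: "prob_space M" and S: "sets M = sets borel" and fin: "finite J"
    and v: "\<And>j. 0 \<le> v j" and UV_borel: "\<And>j. U j \<in> sets borel" "\<And>j. V j \<in> sets borel"
    and UV: "\<And>j. j \<in> J \<Longrightarrow> measure M (U j) \<le> A" "\<And>j. j \<in> J \<Longrightarrow> measure M (V j) \<le> A"
  shows "integrable M (\<lambda>x. \<Sum>j\<in>J. v j * (indicator (U j) x + indicator (V j) x))"
    and "(\<integral>x. (\<Sum>j\<in>J. v j * (indicator (U j) x + indicator (V j) x)) \<partial>M) \<le> 2 * A * (\<Sum>j\<in>J. v j)"
proof -
  interpret prob_space M by (fact P)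
  have indicator_integrable: "integrable M (indicator W :: real \<Rightarrow> real)" if "W \<in> sets borel" for W
    using that S by (intro integrable_real_indicator) (auto simp: less_top[symmetric])
  have term_integrable: "integrable M (\<lambda>x. v j * (indicator (U j) x + indicator (V j) x) :: real)" for j
    by (intro integrable_mult_right Bochner_Integration.integrable_add indicator_integrable UV_borel)
  then show "integrable M (\<lambda>x. \<Sum>j\<in>J. v j * (indicator (U j) x + indicator (V j) x))"
    by (intro Bochner_Integration.integrable_sum)
  have "(\<integral>x. (\<Sum>j\<in>J. v j * (indicator (U j) x + indicator (V j) x)) \<partial>M)
      = (\<Sum>j\<in>J. v j * (measure M (U j) + measure M (V j)))"
    using term_integrable indicator_integrable UV_borel S
    by (simp add: Bochner_Integration.integral_sum Bochner_Integration.integral_add)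
  also have "\<dots> \<le> (\<Sum>j\<in>J. v j * (A + A))"
    using UV v by (intro sum_mono mult_left_mono add_mono) auto
  finally show "(\<integral>x. (\<Sum>j\<in>J. v j * (indicator (U j) x + indicator (V j) x)) \<partial>M) \<le> 2 * A * (\<Sum>j\<in>J. v j)"
    by (simp add: sum_distrib_left sum_distrib_right algebra_simps)
qed

lemma integral_decay_profile_le:
  fixes M :: "real measure"
  assumes P: "prob_space M" and S: "sets M = sets borel" and eta: "\<eta> > 0" "\<eta> \<le> \<epsilon>" "\<eta> \<le> l"
    and windows: "\<And>E. \<bar>E - c\<bar> < \<epsilon> \<Longrightarrow> measure M {E - \<eta>/2 .. E + \<eta>/2} \<le> A"
  shows "integrable M (\<lambda>x. decay_profile l \<eta> (x - c))"
    and "(\<integral>x. decay_profile l \<eta> (x - c) \<partial>M) \<le> 2 * A * (11 + 2 * ln (l/\<eta>)) + 2*\<eta>/\<epsilon>"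
proof -
  interpret prob_space M by (fact P)
  define J where "J = {j::nat. real j * \<eta> < \<epsilon>}"
  define W where "W x = (\<Sum>j\<in>J. decay_weight (l/\<eta>) j *
      (indicator {c + real j * \<eta> - \<eta>/2 .. c + real j * \<eta> + \<eta>/2} x
       + indicator {c - real j * \<eta> - \<eta>/2 .. c - real j * \<eta> + \<eta>/2} x))" for x
  have J: "finite J" unfolding J_def by (rule finite_nat_mult_less[OF eta(1)])
  have "0 \<le> A" using windows[of c] eta by (smt (verit) measure_nonneg)
  have windows_J: "measure M {c + real j * \<eta> - \<eta>/2 .. c + real j * \<eta> + \<eta>/2} \<le> A"
    "measure M {c - real j * \<eta> - \<eta>/2 .. c - real j * \<eta> + \<eta>/2} \<le> A" if "j \<in> J" for j
    using windows[of "c + real j * \<eta>"] windows[of "c - real j * \<eta>"] that eta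
    by (simp_all add: J_def)
  have weight_nonneg: "0 \<le> decay_weight (l/\<eta>) j" for j
    using eta by (intro decay_weight_nonneg) simp
  have W: "integrable M W" "(\<integral>x. W x \<partial>M) \<le> 2 * A * (\<Sum>j\<in>J. decay_weight (l/\<eta>) j)"
    unfolding W_def
    by (rule integral_weighted_windows_le[OF P S J weight_nonneg _ _ windows_J]; simp)+
  have "(\<lambda>x. decay_profile l \<eta> (x - c)) \<in> borel_measurable M"
    unfolding measurable_cong_sets[OF S refl] decay_profile_def by measurable
  then show profile_integrable: "integrable M (\<lambda>x. decay_profile l \<eta> (x - c))"
    using decay_profile_nonneg[of \<eta> l] decay_profile_le_1[OF eta(1)] eta
    by (intro integrable_const_bound[where B=1]) auto
  have "decay_profile l \<eta> (x - c) \<le> W x + 2*\<eta>/\<epsilon>" for x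
    unfolding W_def J_def by (rule decay_profile_le_windows[OF eta])
  moreover have "integrable M (\<lambda>x. W x + 2*\<eta>/\<epsilon>)" using W(1) by simp
  ultimately have "(\<integral>x. decay_profile l \<eta> (x - c) \<partial>M) \<le> (\<integral>x. W x + 2*\<eta>/\<epsilon> \<partial>M)"
    using profile_integrable by (intro integral_mono)
  also have "\<dots> = (\<integral>x. W x \<partial>M) + 2*\<eta>/\<epsilon>"
    using W(1) by (simp add: prob_space)
  also have "\<dots> \<le> 2 * A * (11 + 2 * ln (l/\<eta>)) + 2*\<eta>/\<epsilon>"
  proof -
    have "(\<Sum>j\<in>J. decay_weight (l/\<eta>) j) \<le> 11 + 2 * ln (l/\<eta>)"
      using eta by (intro sum_decay_weight_le[OF _ J]) simp
    then have "2 * A * (\<Sum>j\<in>J. decay_weight (l/\<eta>) j) \<le> 2 * A * (11 + 2 * ln (l/\<eta>))"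
      using \<open>0 \<le> A\<close> by (intro mult_left_mono) auto
    then show ?thesis using W(2) by linarith
  qed
  finally show "(\<integral>x. decay_profile l \<eta> (x - c) \<partial>M) \<le> 2 * A * (11 + 2 * ln (l/\<eta>)) + 2*\<eta>/\<epsilon>" .
qed

lemma abs_measure_diff_set_integral_Im_stieltjes_le_1:
  fixes M :: "real measure" and I :: "real set"
  assumes "prob_space M" "sets M = sets borel" "\<eta> > 0"
    and "a \<le> b" "{a<..<b} \<subseteq> I" "I \<subseteq> {a..b}" "I \<in> sets borel"
  shows "\<bar>measure M I - (1/pi) * (LINT E:I|lborel. Im (stieltjes M (Complex E \<eta>)))\<bar> \<le> 1"
proof -
  interpret prob_space M by (fact assms(1))
  have "\<bar>indicator I x - poisson_indicator a b \<eta> x\<bar> \<le> 1" for x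
    using poisson_indicator_nonneg[OF assms(4,3), of x] poisson_indicator_le_1[of a b \<eta> x]
    by (auto simp: indicator_def)
  then have "\<bar>measure M I - (1/pi) * (LINT E:I|lborel. Im (stieltjes M (Complex E \<eta>)))\<bar>
      \<le> (\<integral>x. 1 \<partial>M)"
    using assms by (intro abs_measure_diff_set_integral_Im_stieltjes_le) auto
  then show ?thesis by (simp add: prob_space)
qed

lemma abs_measure_diff_set_integral_Im_stieltjes_le_windows:
  fixes M :: "real measure" and I :: "real set"
  assumes P: "prob_space M" and S: "sets M = sets borel"
    and eta: "\<eta> > 0" "\<eta> \<le> \<epsilon>" "\<eta> \<le> b - a" and I: "{a<..<b} \<subseteq> I" "I \<subseteq> {a..b}" "I \<in> sets borel"
    and windows: "\<And>E. a - \<epsilon> < E \<Longrightarrow> E < b + \<epsilon> \<Longrightarrow> measure M {E - \<eta>/2 .. E + \<eta>/2} \<le> A"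
  shows "\<bar>measure M I - (1/pi) * (LINT E:I|lborel. Im (stieltjes M (Complex E \<eta>)))\<bar>
    \<le> 4 * A * (11 + 2 * ln ((b - a)/\<eta>)) + 4*\<eta>/\<epsilon>"
proof -
  let ?G = "\<lambda>c x. decay_profile (b - a) \<eta> (x - c)"
  have G: "integrable M (?G c)" "(\<integral>x. ?G c x \<partial>M) \<le> 2 * A * (11 + 2 * ln ((b - a)/\<eta>)) + 2*\<eta>/\<epsilon>"
    if "c = a \<or> c = b" for c
    using that eta windows by (intro integral_decay_profile_le[OF P S eta]; force)+
  have "\<bar>measure M I - (1/pi) * (LINT E:I|lborel. Im (stieltjes M (Complex E \<eta>)))\<bar>
      \<le> (\<integral>x. ?G a x + ?G b x \<partial>M)"
    using G eta abs_indicator_sub_poisson_indicator_le[OF eta(1,3) I(1,2)]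
    by (intro abs_measure_diff_set_integral_Im_stieltjes_le[OF P S eta(1) _ I(1,2,3)]) auto
  also have "\<dots> = (\<integral>x. ?G a x \<partial>M) + (\<integral>x. ?G b x \<partial>M)"
    using G by simp
  also have "\<dots> \<le> 4 * A * (11 + 2 * ln ((b - a)/\<eta>)) + 4*\<eta>/\<epsilon>"
    using G[of a] G[of b] by simp
  finally show ?thesis .
qed

lemma mem_if_dist_compl_ge:
  fixes I K :: "real set"
  assumes ab: "a < b" and sub: "{a<..<b} \<subseteq> I" and dist_ge: "\<forall>x\<in>I. \<forall>y\<in>-K. \<epsilon> \<le> dist x y"
    and c: "a - \<epsilon> < c" "c < b + \<epsilon>" and "\<epsilon> > 0"
  shows "c \<in> K"
proof -
  have "\<exists>y\<in>I. dist y c < \<epsilon>"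
  proof (cases "c \<le> a")
    case True
    define y where "y = (a + min b (c + \<epsilon>))/2"
    have "a < y" "y < b" "c < y" "y < c + \<epsilon>" using ab c True by (auto simp: y_def)
    then show ?thesis using sub by (intro bexI[of _ y]) (auto simp: dist_real_def)
  next
    case False
    show ?thesis
    proof (cases "b \<le> c")
      case True
      define y where "y = (max a (c - \<epsilon>) + b)/2"
      have "a < y" "y < b" "c - \<epsilon> < y" "y < c" using ab c True by (auto simp: y_def)
      then show ?thesis using sub by (intro bexI[of _ y]) (auto simp: dist_real_def)
    next
      case False
      then have "c \<in> I" using sub \<open>\<not> c \<le> a\<close> by auto
      then show ?thesis using \<open>\<epsilon> > 0\<close> by (intro bexI[of _ c]) auto
    qed
  qed
  then show ?thesis using dist_ge by (force simp: dist_commute)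
qed

lemma measure_window_le_near_interval:
  fixes M :: "real measure" and I K :: "real set"
  assumes "prob_space M" "sets M = sets borel" "\<eta> > 0" "L > 0" "\<epsilon> > 0"
    and H: "\<forall>E\<in>K. Im (stieltjes M (Complex E \<eta>)) \<le> L \<or> measure M {E - \<eta>/2 .. E + \<eta>/2} \<le> L * \<eta>"
    and "a < b" "{a<..<b} \<subseteq> I" "\<forall>x\<in>I. \<forall>y\<in>-K. \<epsilon> \<le> dist x y" "a - \<epsilon> < E" "E < b + \<epsilon>"
  shows "measure M {E - \<eta>/2 .. E + \<eta>/2} \<le> 5/4 * L * \<eta>"
proof -
  have "E \<in> K" using mem_if_dist_compl_ge assms(5-) by blast
  moreover have "L * \<eta> \<le> 5/4 * L * \<eta>" using assms(3,4) by simp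
  ultimately show ?thesis
    using H measure_window_le_of_Im_stieltjes_le[OF assms(1-3), of E L] by fastforce
qed

lemma two_thirds_le_ln_1_plus: "1 \<le> m \<Longrightarrow> 2/3 \<le> ln (1 + m :: real)"
  using ln2_ge_two_thirds ln_le_cancel_iff[of 2 "1 + m"] by linarith

lemma one_le_max_mul_ln:
  fixes L \<epsilon> \<eta> m :: real
  assumes "0 < \<epsilon>" "\<epsilon> < \<eta>" "1 \<le> m"
  shows "1 \<le> 100 * max L (1/\<epsilon>) * \<eta> * ln (1 + m)"
proof -
  have "1 \<le> (1/\<epsilon>) * \<eta>" using assms by (simp add: field_simps)
  also have "\<dots> \<le> max L (1/\<epsilon>) * \<eta>" using assms by (intro mult_right_mono) auto
  finally have "1 \<le> max L (1/\<epsilon>) * \<eta>" .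
  moreover have "2/3 \<le> ln (1 + m)" using two_thirds_le_ln_1_plus assms by simp
  ultimately have "1 * (2/3) \<le> max L (1/\<epsilon>) * \<eta> * ln (1 + m)"
    by (intro mult_mono) auto
  then show ?thesis by simp
qed

lemma window_error_le_max_mul_ln:
  fixes L \<epsilon> \<eta> m :: real
  assumes "0 < L" "0 < \<epsilon>" "0 < \<eta>" "1 \<le> m"
  shows "5 * L * \<eta> * (11 + 2 * ln m) + 4*\<eta>/\<epsilon> \<le> 100 * max L (1/\<epsilon>) * \<eta> * ln (1 + m)"
proof -
  define X where "X = \<eta> * ln (1 + m)"
  have "2/3 \<le> ln (1 + m)" using two_thirds_le_ln_1_plus assms by simp
  moreover have "ln m \<le> ln (1 + m)" using assms by simp
  ultimately have "11 + 2 * ln m \<le> 37/2 * ln (1 + m)" by linarith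
  then have "5 * L * \<eta> * (11 + 2 * ln m) \<le> 5 * L * \<eta> * (37/2 * ln (1 + m))"
    using assms by (intro mult_left_mono) auto
  then have "5 * L * \<eta> * (11 + 2 * ln m) \<le> 185/2 * (L * X)" by (simp add: X_def)
  moreover have "4*\<eta>/\<epsilon> \<le> 6 * (1/\<epsilon> * X)"
    using \<open>2/3 \<le> ln (1 + m)\<close> assms by (simp add: X_def field_simps)
  moreover have "0 \<le> X" using \<open>2/3 \<le> ln (1 + m)\<close> assms by (simp add: X_def)
  then have "L * X \<le> max L (1/\<epsilon>) * X" "1/\<epsilon> * X \<le> max L (1/\<epsilon>) * X" "0 \<le> max L (1/\<epsilon>) * X"
    using assms by (simp_all only: mult_right_mono max.cobounded1 max.cobounded2) simp
  moreover have "100 * max L (1/\<epsilon>) * \<eta> * ln (1 + m) = 100 * (max L (1/\<epsilon>) * X)"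
    by (simp add: X_def)
  ultimately show ?thesis by linarith
qed

theorem lemma3p7:
  shows "\<exists>c::real. \<forall>(L::real) (\<epsilon>::real) (K::real set) (M::real measure) (\<eta>::real).
    L > 0 \<longrightarrow> 0 < \<epsilon> \<longrightarrow> \<epsilon> < 1 \<longrightarrow> is_interval K \<longrightarrow>
    prob_space M \<longrightarrow> sets M = sets borel \<longrightarrow> \<eta> > 0 \<longrightarrow>
    (\<forall>E\<in>K. Im (stieltjes M (Complex E \<eta>)) \<le> L \<or>
            measure M {E - \<eta>/2 .. E + \<eta>/2} \<le> L * \<eta>) \<longrightarrow>
    (\<forall>I::real set. is_interval I \<longrightarrow> bounded I \<longrightarrow> I \<subseteq> K \<longrightarrow>
       measure lborel I \<ge> \<eta> \<longrightarrow>
       (\<forall>x\<in>I. \<forall>y\<in>-K. dist x y \<ge> \<epsilon>) \<longrightarrow>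
       \<bar>measure M I - (1/pi) * (LINT E:I|lborel. Im (stieltjes M (Complex E \<eta>)))\<bar>
         \<le> c * max L (1/\<epsilon>) * \<eta> * ln (1 + measure lborel I / \<eta>))"
proof (rule exI[of _ 100], intro allI impI)
  fix L \<epsilon> :: real and K :: "real set" and M :: "real measure" and \<eta> :: real and I :: "real set"
  assume L: "L > 0" and \<epsilon>: "0 < \<epsilon>" "\<epsilon> < 1" and "is_interval K" and P: "prob_space M"
    and S: "sets M = sets borel" and \<eta>: "\<eta> > 0"
    and H: "\<forall>E\<in>K. Im (stieltjes M (Complex E \<eta>)) \<le> L \<or> measure M {E - \<eta>/2 .. E + \<eta>/2} \<le> L * \<eta>"
    and I: "is_interval I" "bounded I" "I \<subseteq> K" "\<eta> \<le> measure lborel I"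
    and dist_K: "\<forall>x\<in>I. \<forall>y\<in>-K. \<epsilon> \<le> dist x y"
  have "I \<noteq> {}" using I(4) \<eta> by auto
  then obtain a b where "a \<le> b" and sub: "{a<..<b} \<subseteq> I" "I \<subseteq> {a..b}"
    and len: "measure lborel I = b - a"
    using bounded_interval_obtain_endpoints[OF I(1,2)] by blast
  have Ib: "I \<in> sets borel" by (rule real_interval_borel_measurable[OF I(1)])
  have m: "1 \<le> (b - a)/\<eta>" using I(4) len \<eta> by simp
  show "\<bar>measure M I - (1/pi) * (LINT E:I|lborel. Im (stieltjes M (Complex E \<eta>)))\<bar>
    \<le> 100 * max L (1/\<epsilon>) * \<eta> * ln (1 + measure lborel I / \<eta>)"
  proof (cases "\<eta> \<le> \<epsilon>")
    case False
    then have "\<epsilon> < \<eta>" by simp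
    then show ?thesis
      using abs_measure_diff_set_integral_Im_stieltjes_le_1[OF P S \<eta> \<open>a \<le> b\<close> sub Ib]
        one_le_max_mul_ln[OF \<epsilon>(1) \<open>\<epsilon> < \<eta>\<close> m, of L] len by simp
  next
    case True
    have "a < b" using I(4) len \<eta> by simp
    note windows = measure_window_le_near_interval[OF P S \<eta> L \<epsilon>(1) H this sub(1) dist_K]
    have "\<bar>measure M I - (1/pi) * (LINT E:I|lborel. Im (stieltjes M (Complex E \<eta>)))\<bar>
        \<le> 4 * (5/4 * L * \<eta>) * (11 + 2 * ln ((b - a)/\<eta>)) + 4*\<eta>/\<epsilon>"
      using I(4) len windows
      by (intro abs_measure_diff_set_integral_Im_stieltjes_le_windows[OF P S \<eta> True _ sub Ib]) auto
    then show ?thesis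
      using window_error_le_max_mul_ln[OF L \<epsilon>(1) \<eta> m] len by simp
  qed
qed

end
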